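(* Let $n$ be a positive integer and suppose there exists a 1-D $(n,4,2)$-OOC with exactly $J(1\times n,4,2)$ codewords. (1) If $n\equiv 1,3\pmod 6$ or $n\equiv 2,10\pmod{24}$, then for every factorization $n=uv$ with $u,v$ positive integers there exists a 2-D $(u\times v,4,2)$-OOC with exactly $J(u\times v,4,2)$ codewords. (2) If $n\equiv 4,20\pmod{24}$ and $n=2n_1$, then there exists a 2-D $(2\times n_1,4,2)$-OOC with exactly $J(2\times n_1,4,2)$ codewords.
   Context: A two-dimensional $(u\times v,k,\lambda)$ optical orthogonal code (2-D $(u\times v,k,\lambda)$-OOC) is a family $\mathcal C$ of $u\times v$ $(0,1)$-matrices, each of Hamming weight $k$, such that for all $A=(a_{ij}),B=(b_{ij})\in\mathcal C$ and every integer $r$ with $A\neq B$ or $r\not\equiv 0\pmod v$, one has $\sum_{i=0}^{u-1}\sum_{j=0}^{v-1}a_{ij}b_{i,j+r}\le\lambda$, column indices taken modulo $v$. A 1-D $(v,k,\lambda)$-OOC is a 2-D $(1\times v,k,\lambda)$-OOC. For $k=4,\lambda=2$ the Johnson bound is $J(u\times v,4,2)=\lfloor\frac{u}{4}\lfloor\frac{uv-1}{3}\lfloor\frac{uv-2}{2}\rfloor\rfloor\rfloor$. *)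

theory Defs
  imports Main
begin

text \<open>A u x v (0,1)-matrix is represented by its support: the set of positions (i,j)
  with entry 1, where i < u and j < v.\<close>

definition is_matrix :: "nat \<Rightarrow> nat \<Rightarrow> (nat \<times> nat) set \<Rightarrow> bool" where
  "is_matrix u v A \<longleftrightarrow> A \<subseteq> {0..<u} \<times> {0..<v}"

definition corr :: "nat \<Rightarrow> (nat \<times> nat) set \<Rightarrow> (nat \<times> nat) set \<Rightarrow> int \<Rightarrow> nat" where
  "corr v A B r = card {(i, j) \<in> A. (i, nat ((int j + r) mod int v)) \<in> B}"

definition is_2D_OOC :: "nat \<Rightarrow> nat \<Rightarrow> nat \<Rightarrow> nat \<Rightarrow> (nat \<times> nat) set set \<Rightarrow> bool" where
  "is_2D_OOC u v k lam C \<longleftrightarrow>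
     (\<forall>A\<in>C. is_matrix u v A \<and> card A = k) \<and>
     (\<forall>A\<in>C. \<forall>B\<in>C. \<forall>r::int. (A \<noteq> B \<or> \<not> (r mod int v = 0)) \<longrightarrow> corr v A B r \<le> lam)"

definition is_1D_OOC :: "nat \<Rightarrow> nat \<Rightarrow> nat \<Rightarrow> (nat \<times> nat) set set \<Rightarrow> bool" where
  "is_1D_OOC v k lam C \<longleftrightarrow> is_2D_OOC 1 v k lam C"

text \<open>Johnson bound J(u x v,4,2) = floor(u/4 * floor((uv-1)/3 * floor((uv-2)/2))).\<close>
definition J42 :: "nat \<Rightarrow> nat \<Rightarrow> int" where
  "J42 u v = (let m = int u * int v in
     (int u * (((m - 1) * ((m - 2) div 2)) div 3)) div 4)"

end

theory Submission
  imports Defs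
begin

text \<open>Write the positions 0, \<dots>, uv - 1 of a 1-D code column by column into a u \<times> v array:
  y goes to row y mod u and column y div u.  A cyclic shift of the array by r columns is then
  the cyclic shift of Z_uv by ru.  Placing every codeword of a 1-D (uv,k,\<lambda>)-OOC into the array
  with each of the u row offsets 0, \<dots>, u - 1 therefore turns the correlation constraints of
  the resulting 2-D code into those of the 1-D code, and gives a 2-D (u \<times> v,k,\<lambda>)-OOC with
  u times as many codewords.  For k = 4, \<lambda> = 2 the Johnson bound is \<lfloor>uM/4\<rfloor> with
  M = johnson_core (uv), so the new code is optimal when \<lfloor>uM/4\<rfloor> = u\<lfloor>M/4\<rfloor>: for every u if
  M \<equiv> 0 (mod 4), and for u = 2 if M \<equiv> 1 (mod 4).  Finally, M mod 4 only depends on uv mod 24.\<close>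

definition colmajor_pos :: "nat \<Rightarrow> nat \<Rightarrow> int \<Rightarrow> nat \<times> nat" where
  "colmajor_pos u v y = (nat (y mod int u), nat (y div int u mod int v))"

definition fold_codeword :: "nat \<Rightarrow> nat \<Rightarrow> nat \<Rightarrow> (nat \<times> nat) set \<Rightarrow> (nat \<times> nat) set" where
  "fold_codeword u v t A = (\<lambda>(_, j). colmajor_pos u v (int j + int t)) ` A"

lemma colmajor_pos_eq_iff:
  assumes "u > 0" "v > 0"
  shows "colmajor_pos u v y = colmajor_pos u v z \<longleftrightarrow> y mod int (u * v) = z mod int (u * v)"
proof -
  have decomp: "w mod int (u * v) = int u * (w div int u mod int v) + w mod int u" for w
    using mod_mult2_eq'[of w u v] by simp
  have "colmajor_pos u v y = colmajor_pos u v z \<longleftrightarrow>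
      y mod int u = z mod int u \<and> y div int u mod int v = z div int u mod int v"
    using assms by (simp add: colmajor_pos_def eq_nat_nat_iff)
  also have "\<dots> \<longleftrightarrow> y mod int (u * v) = z mod int (u * v)"
  proof
    assume eq: "y mod int (u * v) = z mod int (u * v)"
    have "int u dvd int (u * v)" by simp
    then have "y mod int u = z mod int u" using eq by (metis mod_mod_cancel)
    with eq show "y mod int u = z mod int u \<and> y div int u mod int v = z div int u mod int v"
      using decomp[of y] decomp[of z] assms by simp
  qed (metis decomp)
  finally show ?thesis .
qed

lemma colmajor_pos_in_grid:
  assumes "u > 0" "v > 0"
  shows "colmajor_pos u v y \<in> {0..<u} \<times> {0..<v}"
  using assms unfolding colmajor_pos_def by (auto simp: nat_less_iff)

lemma colmajor_pos_shift:
  assumes "u > 0" "v > 0"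
  shows "colmajor_pos u v (y + r * int u) =
    (fst (colmajor_pos u v y), nat ((int (snd (colmajor_pos u v y)) + r) mod int v))"
proof -
  have "(y + r * int u) div int u = y div int u + r" using assms by simp
  then show ?thesis using assms by (simp add: colmajor_pos_def mod_add_right_eq add.commute)
qed

lemma colmajor_pos_row_offset:
  assumes "s < u" "v > 0"
  shows "colmajor_pos u v (int s + r * int u) = (s, nat (r mod int v))"
proof -
  have "(int s + r * int u) div int u = r" using assms by simp
  then show ?thesis using assms by (simp add: colmajor_pos_def)
qed

lemma mem_fold_codeword_iff:
  assumes "u > 0" "v > 0" and B: "B \<subseteq> {0..<1} \<times> {0..<u * v}"
  shows "colmajor_pos u v y \<in> fold_codeword u v t B \<longleftrightarrow>
    (0, nat ((y - int t) mod int (u * v))) \<in> B"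
proof
  assume "colmajor_pos u v y \<in> fold_codeword u v t B"
  then obtain j where j: "(0, j) \<in> B" "colmajor_pos u v (int j + int t) = colmajor_pos u v y"
    using B unfolding fold_codeword_def by fastforce
  have "(int j + int t) mod int (u * v) = y mod int (u * v)"
    using j(2) colmajor_pos_eq_iff[OF assms(1,2)] by blast
  then have "int j mod int (u * v) = (y - int t) mod int (u * v)"
    by (metis add_diff_cancel_right' mod_diff_left_eq)
  moreover have "j < u * v" using j(1) B by auto
  ultimately have "j = nat ((y - int t) mod int (u * v))"
    by (metis nat_int of_nat_less_iff mod_pos_pos_trivial of_nat_0_le_iff)
  with j(1) show "(0, nat ((y - int t) mod int (u * v))) \<in> B" by simp
next
  define j where "j = nat ((y - int t) mod int (u * v))"
  assume "(0, nat ((y - int t) mod int (u * v))) \<in> B"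
  moreover have "(int j + int t) mod int (u * v) = y mod int (u * v)"
    using assms(1,2) by (simp add: j_def mod_add_left_eq)
  then have "colmajor_pos u v (int j + int t) = colmajor_pos u v y"
    using colmajor_pos_eq_iff[OF assms(1,2)] by blast
  ultimately show "colmajor_pos u v y \<in> fold_codeword u v t B"
    unfolding fold_codeword_def j_def by force
qed

lemma inj_on_fold_codeword:
  fixes A :: "(nat \<times> nat) set"
  assumes "u > 0" "v > 0" "A \<subseteq> {0..<1} \<times> {0..<u * v}"
  shows "inj_on (\<lambda>(_, j). colmajor_pos u v (int j + int t)) A"
proof (rule inj_onI, clarify)
  fix i j i' j'
  assume in_A: "(i, j) \<in> A" "(i', j') \<in> A"
    and eq: "colmajor_pos u v (int j + int t) = colmajor_pos u v (int j' + int t)"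
  have "(int j + int t) mod int (u * v) = (int j' + int t) mod int (u * v)"
    using eq colmajor_pos_eq_iff[OF assms(1,2)] by blast
  then have "int j mod int (u * v) = int j' mod int (u * v)"
    by (metis add_diff_cancel_right' mod_diff_left_eq)
  moreover have "j < u * v" "j' < u * v" "i = 0" "i' = 0"
    using assms(3) in_A by auto
  ultimately show "i = i' \<and> j = j'"
    by (metis mod_less of_nat_eq_iff of_nat_mod)
qed

lemma card_fold_codeword:
  fixes A :: "(nat \<times> nat) set"
  assumes "u > 0" "v > 0" "A \<subseteq> {0..<1} \<times> {0..<u * v}"
  shows "card (fold_codeword u v t A) = card A"
  unfolding fold_codeword_def using card_image[OF inj_on_fold_codeword[OF assms]] .

lemma corr_fold_codeword:
  fixes A B :: "(nat \<times> nat) set"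
  assumes u: "u > 0" and v: "v > 0"
    and A: "A \<subseteq> {0..<1} \<times> {0..<u * v}" and B: "B \<subseteq> {0..<1} \<times> {0..<u * v}"
  shows "corr v (fold_codeword u v s A) (fold_codeword u v t B) r =
    corr (u * v) A B (int s - int t + r * int u)"
proof -
  define g where "g = (\<lambda>(_::nat, j). colmajor_pos u v (int j + int s))"
  define R where "R = int s - int t + r * int u"
  have shifted_mem: "(fst (g p), nat ((int (snd (g p)) + r) mod int v)) \<in> fold_codeword u v t B
      \<longleftrightarrow> (fst p, nat ((int (snd p) + R) mod int (u * v))) \<in> B" if "p \<in> A" for p
  proof -
    have "(fst (g p), nat ((int (snd (g p)) + r) mod int v)) =
        colmajor_pos u v (int (snd p) + int s + r * int u)"
      using colmajor_pos_shift[OF u v] by (simp add: g_def split_beta)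
    moreover have "fst p = 0" using that A by auto
    ultimately show ?thesis using mem_fold_codeword_iff[OF u v B] by (simp add: R_def algebra_simps)
  qed
  have "{(i, j) \<in> fold_codeword u v s A. (i, nat ((int j + r) mod int v)) \<in> fold_codeword u v t B}
      = g ` {p \<in> A. (fst (g p), nat ((int (snd (g p)) + r) mod int v)) \<in> fold_codeword u v t B}"
    unfolding fold_codeword_def[of u v s] g_def[symmetric] case_prod_beta prod.collapse by blast
  also have "\<dots> = g ` {(i, j) \<in> A. (i, nat ((int j + R) mod int (u * v))) \<in> B}"
    using shifted_mem by (auto intro!: arg_cong[where f = "image g"])
  moreover have "inj_on g {(i, j) \<in> A. (i, nat ((int j + R) mod int (u * v))) \<in> B}"
    using inj_on_fold_codeword[OF u v A] unfolding g_def by (rule inj_on_subset) auto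
  ultimately show ?thesis unfolding corr_def R_def by (simp add: card_image)
qed

lemma corr_self:
  assumes "is_matrix u v X"
  shows "corr v X X 0 = card X"
proof -
  have "{(i, j) \<in> X. (i, nat (int j mod int v)) \<in> X} = X"
    using assms unfolding is_matrix_def by (auto simp flip: of_nat_mod)
  then show ?thesis unfolding corr_def by simp
qed

lemma row_shift_mod_eq_0_iff:
  assumes "s < u" "t < u" "v > 0"
  shows "(int s - int t + r * int u) mod int (u * v) = 0 \<longleftrightarrow> s = t \<and> r mod int v = 0"
proof -
  have u: "u > 0" using assms(1) by simp
  have "(int s - int t + r * int u) mod int (u * v) = 0 \<longleftrightarrow>
      (int s + r * int u) mod int (u * v) = (int t + 0 * int u) mod int (u * v)"
    by (simp only: mod_eq_0_iff_dvd mod_eq_dvd_iff) (simp add: algebra_simps)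
  also have "\<dots> \<longleftrightarrow> colmajor_pos u v (int s + r * int u) = colmajor_pos u v (int t + 0 * int u)"
    by (rule colmajor_pos_eq_iff[OF u assms(3), symmetric])
  also have "\<dots> \<longleftrightarrow> (s, nat (r mod int v)) = (t, nat (0 mod int v))"
    by (simp only: colmajor_pos_row_offset[OF assms(1,3)] colmajor_pos_row_offset[OF assms(2,3)])
  also have "\<dots> \<longleftrightarrow> s = t \<and> r mod int v = 0"
  proof -
    have "0 \<le> r mod int v" using assms(3) by simp
    then show ?thesis by auto
  qed
  finally show ?thesis .
qed

context
  fixes u v k lam :: nat and C :: "(nat \<times> nat) set set"
  assumes u: "u > 0" and v: "v > 0" and OOC: "is_2D_OOC 1 (u * v) k lam C"
begin

lemma codeword_in_row:
  assumes "A \<in> C"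
  shows "A \<subseteq> {0..<1} \<times> {0..<u * v}"
  using bspec[OF conjunct1[OF OOC[unfolded is_2D_OOC_def]] assms] unfolding is_matrix_def by simp

lemma card_codeword:
  assumes "A \<in> C"
  shows "card A = k"
  using bspec[OF conjunct1[OF OOC[unfolded is_2D_OOC_def]] assms] by simp

lemma corr_codewords_le:
  assumes "A \<in> C" "B \<in> C" "A \<noteq> B \<or> r mod int (u * v) \<noteq> 0"
  shows "corr (u * v) A B r \<le> lam"
  using conjunct2[OF OOC[unfolded is_2D_OOC_def]] assms by simp

lemma corr_fold_codewords_le:
  assumes "A \<in> C" "B \<in> C" "s < u" "t < u" "\<not> (A = B \<and> s = t \<and> r mod int v = 0)"
  shows "corr v (fold_codeword u v s A) (fold_codeword u v t B) r \<le> lam"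
proof -
  have "A \<noteq> B \<or> (int s - int t + r * int u) mod int (u * v) \<noteq> 0"
    using assms(5) row_shift_mod_eq_0_iff[OF assms(3,4) v] by simp
  then show ?thesis
    using corr_fold_codeword[OF u v codeword_in_row[OF assms(1)] codeword_in_row[OF assms(2)]]
      corr_codewords_le[OF assms(1,2)] by simp
qed

lemma fold_codeword_is_matrix: "is_matrix u v (fold_codeword u v t A)"
  using colmajor_pos_in_grid[OF u v]
  unfolding is_matrix_def fold_codeword_def by (simp add: image_subset_iff split_beta)

lemma card_fold_codeword_in_code:
  assumes "A \<in> C"
  shows "card (fold_codeword u v t A) = k"
  using card_fold_codeword[OF u v codeword_in_row[OF assms]] card_codeword[OF assms] by simp

lemma fold_codewords_OOC:
  "is_2D_OOC u v k lam ((\<lambda>(A, t). fold_codeword u v t A) ` (C \<times> {..<u}))"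
  unfolding is_2D_OOC_def
proof (rule conjI; intro ballI allI impI)
  fix X assume "X \<in> (\<lambda>(A, t). fold_codeword u v t A) ` (C \<times> {..<u})"
  then obtain A t where "A \<in> C" "X = fold_codeword u v t A" by auto
  then show "is_matrix u v X \<and> card X = k"
    using fold_codeword_is_matrix card_fold_codeword_in_code by simp
next
  fix X Y r
  assume "X \<in> (\<lambda>(A, t). fold_codeword u v t A) ` (C \<times> {..<u})"
    and "Y \<in> (\<lambda>(A, t). fold_codeword u v t A) ` (C \<times> {..<u})"
    and XY: "X \<noteq> Y \<or> r mod int v \<noteq> 0"
  then obtain A s B t where "A \<in> C" "s < u" "X = fold_codeword u v s A"
    and "B \<in> C" "t < u" "Y = fold_codeword u v t B"
    by auto
  with XY show "corr v X Y r \<le> lam"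
    using corr_fold_codewords_le[of A B s t r] by blast
qed

lemma inj_on_fold_codewords:
  assumes "lam < k"
  shows "inj_on (\<lambda>(A, t). fold_codeword u v t A) (C \<times> {..<u})"
proof (rule inj_onI, clarsimp)
  fix A s B t
  assume A: "A \<in> C" "s < u" and B: "B \<in> C" "t < u"
    and eq: "fold_codeword u v s A = fold_codeword u v t B"
  have "corr v (fold_codeword u v s A) (fold_codeword u v t B) 0 = k"
    unfolding eq using corr_self[OF fold_codeword_is_matrix] card_fold_codeword_in_code[OF B(1)]
    by simp
  with assms show "A = B \<and> s = t"
    using corr_fold_codewords_le[OF A(1) B(1) A(2) B(2), of 0] by linarith
qed

end

lemma OOC_1D_to_2D:
  assumes "u > 0" "v > 0" "is_2D_OOC 1 (u * v) k lam C" "finite C" "lam < k"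
  shows "\<exists>C'. is_2D_OOC u v k lam C' \<and> finite C' \<and> card C' = u * card C"
proof (intro exI conjI)
  let ?C' = "(\<lambda>(A, t). fold_codeword u v t A) ` (C \<times> {..<u})"
  show "is_2D_OOC u v k lam ?C'"
    by (rule fold_codewords_OOC[OF assms(1-3)])
  show "finite ?C'"
    by (intro finite_imageI finite_cartesian_product assms(4) finite_lessThan)
  have "card ?C' = card (C \<times> {..<u})"
    by (rule card_image[OF inj_on_fold_codewords[OF assms(1-3,5)]])
  also have "\<dots> = card C * card {..<u}"
    by (rule card_cartesian_product)
  finally show "card ?C' = u * card C"
    by simp
qed

definition johnson_core :: "int \<Rightarrow> int" where
  "johnson_core m = ((m - 1) * ((m - 2) div 2)) div 3"

lemma J42_mult:
  assumes "int u * (johnson_core (int (u * v)) mod 4) < 4"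
  shows "J42 u v = int u * J42 1 (u * v)"
proof -
  define M where "M = johnson_core (int (u * v))"
  have "int u * M = int u * (M mod 4) + 4 * (int u * (M div 4))"
    by (metis distrib_left mod_div_mult_eq mult.commute mult.left_commute)
  moreover have "0 \<le> int u * (M mod 4)" by simp
  ultimately have "int u * M div 4 = int u * (M div 4)"
    using assms unfolding M_def by simp
  then show ?thesis unfolding J42_def johnson_core_def M_def Let_def by simp
qed

lemma johnson_core_add_24_mod_4: "johnson_core (m + 24) mod 4 = johnson_core m mod 4"
proof -
  define h where "h = (m - 2) div 2"
  have "(m + 24 - 2) div 2 = h + 12" unfolding h_def by simp
  then have "(m + 24 - 1) * ((m + 24 - 2) div 2) = (m - 1) * h + 3 * (4 * (2 * h + m + 23))"
    by (simp add: algebra_simps)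
  then have "johnson_core (m + 24) = johnson_core m + 4 * (2 * h + m + 23)"
    unfolding johnson_core_def h_def by simp
  then show ?thesis by (metis mod_mult_self2)
qed

lemma johnson_core_mod_4_mod_24: "johnson_core (int n) mod 4 = johnson_core (int (n mod 24)) mod 4"
proof -
  have "johnson_core (m + 24 * int q) mod 4 = johnson_core m mod 4" for m q
  proof (induction q)
    case (Suc q)
    have "m + 24 * int (Suc q) = (m + 24 * int q) + 24" by simp
    then show ?case
      using Suc johnson_core_add_24_mod_4[of "m + 24 * int q"] by presburger
  qed simp
  moreover have "int n = int (n mod 24) + 24 * int (n div 24)"
    using div_mult_mod_eq[of n 24] by linarith
  ultimately show ?thesis by metis
qed

lemma mod_24_residues:
  fixes n :: nat
  assumes "n mod 6 \<in> {1, 3} \<or> n mod 24 \<in> {2, 10}"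
  shows "n mod 24 \<in> {1, 3, 7, 9, 13, 15, 19, 21, 2, 10}"
proof -
  obtain a b where "n mod 24 = 6 * a + b" "a < 4" "b = n mod 6"
    using mod_mult2_eq[of n 6 4] by simp
  moreover have "a < 4 \<Longrightarrow> a \<in> {0, 1, 2, 3}" for a :: nat by auto
  ultimately show ?thesis using assms by auto
qed

lemma johnson_core_mod_4_eq_0:
  assumes "n mod 6 \<in> {1, 3} \<or> n mod 24 \<in> {2, 10}"
  shows "johnson_core (int n) mod 4 = 0"
proof -
  have "r \<in> {1, 3, 7, 9, 13, 15, 19, 21, 2, 10} \<Longrightarrow> johnson_core (int r) mod 4 = 0" for r :: nat
    by (auto simp: johnson_core_def)
  from this[OF mod_24_residues[OF assms]] show ?thesis
    by (simp only: johnson_core_mod_4_mod_24[of n])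
qed

lemma johnson_core_mod_4_eq_1:
  assumes "n mod 24 \<in> {4, 20}"
  shows "johnson_core (int n) mod 4 = 1"
proof -
  have "r \<in> {4, 20} \<Longrightarrow> johnson_core (int r) mod 4 = 1" for r :: nat
    by (auto simp: johnson_core_def)
  from this[OF assms] show ?thesis
    by (simp only: johnson_core_mod_4_mod_24[of n])
qed

lemma optimal_OOC_1D_to_2D:
  assumes "u > 0" "v > 0" "is_2D_OOC 1 (u * v) 4 2 C" "finite C" "int (card C) = J42 1 (u * v)"
    and "int u * (johnson_core (int (u * v)) mod 4) < 4"
  shows "\<exists>C'. is_2D_OOC u v 4 2 C' \<and> finite C' \<and> int (card C') = J42 u v"
proof -
  obtain C' where "is_2D_OOC u v 4 2 C'" "finite C'" "card C' = u * card C"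
    using OOC_1D_to_2D[OF assms(1-4)] by auto
  moreover have "J42 u v = int u * J42 1 (u * v)"
    by (rule J42_mult[OF assms(6)])
  ultimately show ?thesis using assms(5) by auto
qed

theorem corollary2p5:
  fixes n :: nat
  assumes "n > 0"
    and "\<exists>C. is_1D_OOC n 4 2 C \<and> finite C \<and> int (card C) = J42 1 n"
  shows "((n mod 6 \<in> {1, 3} \<or> n mod 24 \<in> {2, 10}) \<longrightarrow>
           (\<forall>u v. u > 0 \<and> v > 0 \<and> n = u * v \<longrightarrow>
              (\<exists>C. is_2D_OOC u v 4 2 C \<and> finite C \<and> int (card C) = J42 u v)))
       \<and> (\<forall>n1. n mod 24 \<in> {4, 20} \<and> n = 2 * n1 \<longrightarrow>
              (\<exists>C. is_2D_OOC 2 n1 4 2 C \<and> finite C \<and> int (card C) = J42 2 n1))"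
proof -
  obtain C where C: "is_2D_OOC 1 n 4 2 C" "finite C" "int (card C) = J42 1 n"
    using assms(2) unfolding is_1D_OOC_def by blast
  show ?thesis
  proof (intro conjI impI allI)
    fix u v
    assume "n mod 6 \<in> {1, 3} \<or> n mod 24 \<in> {2, 10}" and uv: "u > 0 \<and> v > 0 \<and> n = u * v"
    from this(1) have "johnson_core (int n) mod 4 = 0" by (rule johnson_core_mod_4_eq_0)
    with uv C show "\<exists>C. is_2D_OOC u v 4 2 C \<and> finite C \<and> int (card C) = J42 u v"
      using optimal_OOC_1D_to_2D[of u v C] by simp
  next
    fix n1
    assume n1: "n mod 24 \<in> {4, 20} \<and> n = 2 * n1"
    then have "johnson_core (int n) mod 4 = 1" using johnson_core_mod_4_eq_1 by blast
    with n1 assms(1) C show "\<exists>C. is_2D_OOC 2 n1 4 2 C \<and> finite C \<and> int (card C) = J42 2 n1"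
      using optimal_OOC_1D_to_2D[of 2 n1 C] by simp
  qed
qed

end
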